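(* Fix $\theta\in[0,1]$, $u\in[0,1)$, $m\in\mathbb N$ ($m\ge2$ if $u>0$) and $h=\tau/(m-u)$. If there exists $p\in\mathbb R$ such that $$F\big(A^{\frac p2-1}BA^{-\frac p2}\big)\subseteq\bigcap_{y\in -hF(A)}D_y,$$ then the $\theta$-method is stable. (Here $-hF(A)=\{-hz: z\in F(A)\}=[-h\lambda_{\max}(A),-h\lambda_{\min}(A)]\subset(-\infty,0)$.)
   Context: Let $N\in\mathbb N$, $\tau>0$, let $A\in M_N(\mathbb C)$ be Hermitian positive definite and $B\in M_N(\mathbb C)$ arbitrary, and consider the delay differential equation $y'(t)=-Ay(t)+By(t-\tau)$. Fix $\theta\in[0,1]$, $u\in[0,1)$ and $m\in\mathbb N$ (with $m\ge2$ if $u>0$), and set the step size $h=\tau/(m-u)$. The $\theta$-method (with linear interpolation of the delayed term) is the recursion, for $n\ge0$ and arbitrary starting values $y_{-m},\dots,y_0\in\mathbb C^N$, $$y_{n+1}=y_n+h(1-\theta)\big[-Ay_n+B((1-u)y_{n-m}+u\,y_{n-m+1})\big]+h\theta\big[-Ay_{n+1}+B((1-u)y_{n-m+1}+u\,y_{n-m+2})\big].$$ The method is called stable (for these $\theta,u,m,h$) if for every choice of starting values $y_n\to0$ as $n\to\infty$. Define $a(z)=z^{m+1}-z^m$, $b(z)=\theta(uz^2+(1-u)z)+(1-\theta)(uz+(1-u))$, $c(z)=\theta z^{m+1}+(1-\theta)z^m$. For $y<0$, $D_y$ is the set of $\mu\in\mathbb C$ such that all roots $\xi$ of $a(\xi)=y\,c(\xi)-y\mu\,b(\xi)$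 satisfy $|\xi|<1$. For $s\in\mathbb R$, $A^s$ is defined via the spectral decomposition of $A$; $F(M)=\{x^*Mx:x\in\mathbb C^N,\ x^*x=1\}$ is the field of values. *)

theory Defs
  imports "HOL-Analysis.Analysis"
begin

text \<open>Square complex matrices are represented as complex^'n^'n (N = CARD('n)).\<close>

definition adjoint_mat :: "complex^'n^'m \<Rightarrow> complex^'m^'n" where
  "adjoint_mat M = (\<chi> i j. cnj (M $ j $ i))"

definition hermitian_mat :: "complex^'n^'n \<Rightarrow> bool" where
  "hermitian_mat A \<longleftrightarrow> adjoint_mat A = A"

definition qform :: "complex^'n \<Rightarrow> complex^'n^'n \<Rightarrow> complex" where
  "qform x M = (\<Sum>i\<in>UNIV. cnj (x $ i) * (M *v x) $ i)"

definition pos_def_mat :: "complex^'n^'n \<Rightarrow> bool" where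
  "pos_def_mat A \<longleftrightarrow> hermitian_mat A \<and> (\<forall>x. x \<noteq> 0 \<longrightarrow> Re (qform x A) > 0)"

definition unitary_mat :: "complex^'n^'n \<Rightarrow> bool" where
  "unitary_mat U \<longleftrightarrow> adjoint_mat U ** U = mat 1"

definition diag_mat :: "('n \<Rightarrow> complex) \<Rightarrow> complex^'n^'n" where
  "diag_mat d = (\<chi> i j. if i = j then d i else 0)"

text \<open>Real power A^s of a Hermitian positive definite matrix, defined via a spectral
  decomposition A = U diag(lambda) U^* (U unitary, lambda > 0): A^s = U diag(lambda^s) U^*.
  (The result does not depend on the chosen decomposition.)\<close>
definition mat_rpow :: "complex^'n^'n \<Rightarrow> real \<Rightarrow> complex^'n^'n" where
  "mat_rpow A s = (SOME M. \<exists>U (d :: 'n \<Rightarrow> real).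
      unitary_mat U \<and> (\<forall>i. d i > 0) \<and>
      A = U ** diag_mat (\<lambda>i. complex_of_real (d i)) ** adjoint_mat U \<and>
      M = U ** diag_mat (\<lambda>i. complex_of_real (d i powr s)) ** adjoint_mat U)"

definition field_of_values :: "complex^'n^'n \<Rightarrow> complex set" where
  "field_of_values M = {qform x M | x. (\<Sum>i\<in>UNIV. (cmod (x $ i))\<^sup>2) = 1}"

definition a_poly :: "nat \<Rightarrow> complex \<Rightarrow> complex" where
  "a_poly m z = z ^ (m + 1) - z ^ m"

definition b_poly :: "real \<Rightarrow> real \<Rightarrow> complex \<Rightarrow> complex" where
  "b_poly \<theta> u z = of_real \<theta> * (of_real u * z\<^sup>2 + of_real (1 - u) * z)
                    + of_real (1 - \<theta>) * (of_real u * z + of_real (1 - u))"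

definition c_poly :: "real \<Rightarrow> nat \<Rightarrow> complex \<Rightarrow> complex" where
  "c_poly \<theta> m z = of_real \<theta> * z ^ (m + 1) + of_real (1 - \<theta>) * z ^ m"

definition D_set :: "real \<Rightarrow> real \<Rightarrow> nat \<Rightarrow> complex \<Rightarrow> complex set" where
  "D_set \<theta> u m y = {\<mu>. \<forall>\<xi>. a_poly m \<xi> = y * c_poly \<theta> m \<xi> - y * \<mu> * b_poly \<theta> u \<xi>
                              \<longrightarrow> cmod \<xi> < 1}"

text \<open>One step of the theta-method with linear interpolation of the delayed term.\<close>
definition theta_step :: "complex^'n^'n \<Rightarrow> complex^'n^'n \<Rightarrow> real \<Rightarrow> real \<Rightarrow> nat \<Rightarrow> real
    \<Rightarrow> (int \<Rightarrow> complex^'n) \<Rightarrow> int \<Rightarrow> bool" where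
  "theta_step A B \<theta> u m h y n \<longleftrightarrow>
     y (n + 1) = y n
       + complex_of_real (h * (1 - \<theta>)) *s
           (- (A *v y n) + B *v (complex_of_real (1 - u) *s y (n - int m)
                                 + complex_of_real u *s y (n - int m + 1)))
       + complex_of_real (h * \<theta>) *s
           (- (A *v y (n + 1)) + B *v (complex_of_real (1 - u) *s y (n - int m + 1)
                                       + complex_of_real u *s y (n - int m + 2)))"

definition theta_stable :: "complex^'n^'n \<Rightarrow> complex^'n^'n \<Rightarrow> real \<Rightarrow> real \<Rightarrow> nat \<Rightarrow> real \<Rightarrow> bool" where
  "theta_stable A B \<theta> u m h \<longleftrightarrow>
     (\<forall>y :: int \<Rightarrow> complex^'n. (\<forall>n \<ge> 0. theta_step A B \<theta> u m h y n)
        \<longrightarrow> (\<lambda>k::nat. y (int k)) \<longlonglongrightarrow> 0)"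

end

(* A step of the theta-method is a matrix recurrence G y(n+1) = \<Sum>b\<le>m. C b y(n-b)
   with G = I + h \<theta> A invertible.  Through the block companion matrix, whose powers are
   controlled by its Jordan normal form, every solution decays as soon as each \<xi> admitting
   a null vector w of \<xi>^(m+1) G - \<Sum>b\<le>m. \<xi>^(m-b) C b lies in the open unit disc.
   Such a w satisfies a(\<xi>) w + h c(\<xi>) A w = h b(\<xi>) B w.  Testing this against
   A^(p-1) w gives a(\<xi>) = y c(\<xi>) - y \<mu> b(\<xi>), where y = -h z with z the Rayleigh
   quotient of A at A^((p-1)/2) w, and \<mu> is the Rayleigh quotient of A^(p/2-1) B A^(-p/2)
   at A^(p/2) w.  Hence \<mu> \<in> D_y by hypothesis, i.e. |\<xi>| < 1. *)

theory Submission
  imports Defs "Jordan_Normal_Form.Spectral_Radius"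
begin

no_notation vec_index (infixl "$" 100)

section \<open>Decay of matrix powers\<close>

lemma pow_mat_smult:
  assumes S: "(S :: 'a :: comm_ring_1 mat) \<in> carrier_mat n n"
  shows "(c \<cdot>\<^sub>m S) ^\<^sub>m k = c ^ k \<cdot>\<^sub>m S ^\<^sub>m k"
proof (induction k)
  case 0
  show ?case using S by (intro eq_matI) auto
next
  case (Suc k)
  have "(c \<cdot>\<^sub>m S) ^\<^sub>m Suc k = (c ^ k \<cdot>\<^sub>m S ^\<^sub>m k) * (c \<cdot>\<^sub>m S)"
    using Suc by simp
  also have "\<dots> = c ^ Suc k \<cdot>\<^sub>m S ^\<^sub>m Suc k"
    using S by (intro eq_matI) (auto simp: scalar_prod_def sum_distrib_left ac_simps)
  finally show ?case .
qed

lemma smult_mat_mult_vec: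
  assumes "(S :: 'a :: comm_ring_1 mat) \<in> carrier_mat n n" and "v \<in> carrier_vec n"
  shows "(c \<cdot>\<^sub>m S) *\<^sub>v v = c \<cdot>\<^sub>v (S *\<^sub>v v)"
  using assms by (intro eq_vecI) (auto simp: scalar_prod_def sum_distrib_left ac_simps)

lemma eigenvalue_smult_mat:
  assumes S: "(S :: 'a :: comm_ring_1 mat) \<in> carrier_mat n n" and "eigenvalue S f"
  shows "eigenvalue (c \<cdot>\<^sub>m S) (c * f)"
proof -
  obtain v where v: "v \<in> carrier_vec n" "v \<noteq> 0\<^sub>v n" "S *\<^sub>v v = f \<cdot>\<^sub>v v"
    using assms unfolding eigenvalue_def eigenvector_def by auto
  have "(c \<cdot>\<^sub>m S) *\<^sub>v v = (c * f) \<cdot>\<^sub>v v"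
    using smult_mat_mult_vec[OF S v(1)] v(3) by (simp add: smult_smult_assoc)
  then show ?thesis
    using S v unfolding eigenvalue_def eigenvector_def by auto
qed

lemma norm_bound_mult_vec_index:
  assumes A: "A \<in> carrier_mat n n" and "norm_bound A c" and x: "x \<in> carrier_vec n" and i: "i < n"
  shows "cmod (vec_index (A *\<^sub>v x) i) \<le> c * (\<Sum>j<n. cmod (vec_index x j))"
proof -
  have "cmod (A $$ (i, j)) \<le> c" if "j < n" for j
    using assms that unfolding norm_bound_def by auto
  then have "cmod (\<Sum>j<n. A $$ (i, j) * vec_index x j) \<le> (\<Sum>j<n. c * cmod (vec_index x j))"
    by (intro order.trans[OF norm_sum] sum_mono) (auto simp: norm_mult mult_right_mono)
  then show ?thesis
    using A x i by (simp add: scalar_prod_def atLeast0LessThan sum_distrib_left ac_simps)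
qed

lemma spectral_radius_less_1:
  assumes T: "T \<in> carrier_mat n n" and n: "n > 0"
    and ev: "\<And>\<xi>. eigenvalue T \<xi> \<Longrightarrow> cmod \<xi> < 1"
  shows "spectral_radius T < 1"
proof -
  obtain \<xi> where "eigenvalue T \<xi>" "spectral_radius T = cmod \<xi>"
    using spectral_radius_mem_max(1)[OF T n] unfolding spectrum_def by auto
  then show ?thesis using ev by simp
qed

text \<open>Rescaling T by the inverse of a number r strictly between its spectral radius and 1
  leaves a matrix of spectral radius below 1, whose powers are bounded by the Jordan normal
  form; hence the powers of T decay like r^k.\<close>
lemma pow_mat_mult_vec_tendsto_zero:
  fixes T :: "complex mat"
  assumes T: "T \<in> carrier_mat n n"
    and ev: "\<And>\<xi>. eigenvalue T \<xi> \<Longrightarrow> cmod \<xi> < 1"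
    and x: "x \<in> carrier_vec n" and i: "i < n"
  shows "(\<lambda>k. vec_index (T ^\<^sub>m k *\<^sub>v x) i) \<longlonglongrightarrow> 0"
proof -
  have n: "n > 0" using i by simp
  define \<rho> where "\<rho> = spectral_radius T"
  have "\<rho> < 1" unfolding \<rho>_def by (rule spectral_radius_less_1[OF T n ev])
  moreover have "\<rho> \<ge> 0"
    using spectral_radius_mem_max(1)[OF T n] unfolding \<rho>_def by auto
  ultimately obtain r where r: "0 < r" "r < 1" "\<rho> < r"
    by (intro that[of "(1 + \<rho>) / 2"]) auto
  define S where "S = complex_of_real (1 / r) \<cdot>\<^sub>m T"
  have S: "S \<in> carrier_mat n n" using T unfolding S_def by simp
  have TS: "T = complex_of_real r \<cdot>\<^sub>m S"
    using T r unfolding S_def by (intro eq_matI) auto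
  have "spectral_radius S < 1"
  proof (rule spectral_radius_less_1[OF S n])
    fix f assume "eigenvalue S f"
    then have "eigenvalue T (complex_of_real r * f)"
      unfolding TS by (rule eigenvalue_smult_mat[OF S])
    then have "cmod (complex_of_real r * f) \<le> \<rho>"
      using spectral_radius_mem_max(2)[OF T n] unfolding \<rho>_def spectrum_def by blast
    then have "r * cmod f \<le> \<rho>" using r(1) by (simp add: norm_mult)
    then have "r * cmod f < r * 1" using r(3) by linarith
    then show "cmod f < 1" using r(1) mult_less_cancel_left_pos by blast
  qed
  then obtain c where c: "\<And>k. norm_bound (S ^\<^sub>m k) c"
    using spectral_radius_jnf_norm_bound_less_1_upper_triangular[OF S] by auto
  define K where "K = c * (\<Sum>j<n. cmod (vec_index x j))"
  have bound: "cmod (vec_index (T ^\<^sub>m k *\<^sub>v x) i) \<le> r ^ k * K" for k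
  proof -
    have "T ^\<^sub>m k *\<^sub>v x = complex_of_real (r ^ k) \<cdot>\<^sub>v (S ^\<^sub>m k *\<^sub>v x)"
      unfolding TS pow_mat_smult[OF S] by (simp add: smult_mat_mult_vec[OF pow_carrier_mat[OF S] x])
    then have "cmod (vec_index (T ^\<^sub>m k *\<^sub>v x) i) = r ^ k * cmod (vec_index (S ^\<^sub>m k *\<^sub>v x) i)"
      using S x i r(1) by (simp add: norm_mult norm_power)
    also have "\<dots> \<le> r ^ k * K"
      unfolding K_def using r(1) norm_bound_mult_vec_index[OF pow_carrier_mat[OF S] c x i]
      by (simp add: mult_left_mono)
    finally show ?thesis .
  qed
  have "(\<lambda>k. r ^ k * K) \<longlonglongrightarrow> 0"
    using LIMSEQ_power_zero[of r] r by (auto intro: tendsto_mult_left_zero)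
  then show ?thesis
    by (rule Lim_null_comparison[rotated]) (use bound in auto)
qed

section \<open>Linear recurrences with matrix coefficients\<close>

lemma to_nat_on_UNIV_less: "to_nat_on (UNIV :: 'n :: finite set) t < CARD('n)"
  using to_nat_on_finite[of "UNIV :: 'n set"] by (auto simp: bij_betw_def)

lemma to_nat_on_from_nat_into_UNIV:
  "i < CARD('n :: finite) \<Longrightarrow> to_nat_on (UNIV :: 'n set) (from_nat_into UNIV i) = i"
  using to_nat_on_finite[of "UNIV :: 'n set"] by (intro to_nat_on_from_nat_into) (auto simp: bij_betw_def)

lemma sum_lessThan_blocks:
  "(\<Sum>j < CARD('n :: finite) * (m + 1). f j)
     = (\<Sum>b\<le>m. \<Sum>t\<in>(UNIV :: 'n set). f (b * CARD('n) + to_nat_on UNIV t))"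
proof -
  let ?N = "CARD('n)"
  have "(\<Sum>j < ?N * (m + 1). f j) = (\<Sum>b<m + 1. \<Sum>s<?N. f (b * ?N + s))"
  proof -
    have "(\<Sum>j < ?N * (m + 1). f j) = (\<Sum>b<m + 1. sum f {b * ?N..<b * ?N + ?N})"
      using sum.nat_group[of f ?N "m + 1"] by (metis mult.commute)
    then show ?thesis
      by (simp add: sum.atLeastLessThan_shift_0[of f] atLeast0LessThan comp_def)
  qed
  also have "\<dots> = (\<Sum>b\<le>m. \<Sum>t\<in>(UNIV :: 'n set). f (b * ?N + to_nat_on UNIV t))"
    unfolding Suc_eq_plus1[symmetric] lessThan_Suc_atMost
    by (intro sum.cong refl sum.reindex_bij_betw[OF to_nat_on_finite, symmetric]) simp
  finally show ?thesis .
qed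

text \<open>The block companion matrix of the recurrence y(k+1) = \<Sum>b\<le>m. M b y(k-b), acting on
  stacked states (y(k), y(k-1), ..., y(k-m)); the s-th coordinate of block b sits at index
  b * CARD('n) + to_nat_on UNIV s.\<close>
definition companion_mat :: "nat \<Rightarrow> (nat \<Rightarrow> complex^'n^'n) \<Rightarrow> complex mat" where
  "companion_mat m M = mat (CARD('n) * (m + 1)) (CARD('n) * (m + 1)) (\<lambda>(i, j).
     if i < CARD('n) then M (j div CARD('n)) $ from_nat_into UNIV i $ from_nat_into UNIV (j mod CARD('n))
     else if j + CARD('n) = i then 1 else 0)"

definition vec_block :: "complex vec \<Rightarrow> nat \<Rightarrow> complex^'n" where
  "vec_block V b = (\<chi> t. vec_index V (b * CARD('n) + to_nat_on UNIV t))"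

definition stacked_state :: "nat \<Rightarrow> (int \<Rightarrow> complex^'n) \<Rightarrow> nat \<Rightarrow> complex vec" where
  "stacked_state m y k = vec (CARD('n) * (m + 1))
     (\<lambda>i. y (int k - int (i div CARD('n))) $ from_nat_into UNIV (i mod CARD('n)))"

lemma block_index_less:
  fixes t :: "'n :: finite"
  assumes "b \<le> m"
  shows "b * CARD('n) + to_nat_on UNIV t < CARD('n) * (m + 1)"
proof -
  have "b * CARD('n) + to_nat_on UNIV t < (b + 1) * CARD('n)"
    using to_nat_on_UNIV_less[of t] by simp
  also have "\<dots> \<le> CARD('n) * (m + 1)"
    using assms by (simp add: mult.commute)
  finally show ?thesis .
qed

lemma vec_eq_from_blocks:
  assumes "V \<in> carrier_vec (CARD('n) * (m + 1))" "W \<in> carrier_vec (CARD('n) * (m + 1))"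
    and blocks: "\<And>b. b \<le> m \<Longrightarrow> (vec_block V b :: complex^'n) = vec_block W b"
  shows "V = W"
proof (rule eq_vecI)
  fix i assume "i < dim_vec W"
  then have i: "i < CARD('n) * (m + 1)" using assms(2) by simp
  define t :: 'n where "t = from_nat_into UNIV (i mod CARD('n))"
  have idx: "i = i div CARD('n) * CARD('n) + to_nat_on UNIV t"
    unfolding t_def by (simp add: to_nat_on_from_nat_into_UNIV)
  have "i div CARD('n) \<le> m"
    using less_mult_imp_div_less[of i "m + 1" "CARD('n)"] i by (simp add: mult.commute)
  from arg_cong[OF blocks[OF this], of "\<lambda>w. w $ t"]
  show "vec_index V i = vec_index W i"
    unfolding vec_block_def by (simp flip: idx)
qed (use assms in simp)

lemma vec_block_companion_mat_mult:
  fixes M :: "nat \<Rightarrow> complex^'n^'n"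
  assumes V: "V \<in> carrier_vec (CARD('n) * (m + 1))" and b: "b \<le> m"
  shows "vec_block (companion_mat m M *\<^sub>v V) b
    = (if b = 0 then (\<Sum>c\<le>m. M c *v vec_block V c) else vec_block V (b - 1))"
proof (rule Finite_Cartesian_Product.vec_eq_iff[THEN iffD2], rule allI)
  fix t :: 'n
  define i where "i = b * CARD('n) + to_nat_on UNIV t"
  have i: "i < CARD('n) * (m + 1)" unfolding i_def using b by (rule block_index_less)
  have row: "vec_index (companion_mat m M *\<^sub>v V) i
      = (\<Sum>j < CARD('n) * (m + 1). companion_mat m M $$ (i, j) * vec_index V j)"
    using V i by (simp add: companion_mat_def scalar_prod_def atLeast0LessThan)
  show "vec_block (companion_mat m M *\<^sub>v V) b $ t
      = (if b = 0 then (\<Sum>c\<le>m. M c *v vec_block V c) else vec_block V (b - 1)) $ t"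
  proof (cases "b = 0")
    case True
    then have "i < CARD('n)" "from_nat_into UNIV i = t"
      unfolding i_def using to_nat_on_UNIV_less[of t] by simp_all
    then have entry: "companion_mat m M $$ (i, c * CARD('n) + to_nat_on UNIV s) = M c $ t $ s"
      if "c \<le> m" for c s
      using i block_index_less[OF that, of s] to_nat_on_UNIV_less[of s]
      by (simp add: companion_mat_def)
    have "vec_index (companion_mat m M *\<^sub>v V) i
        = (\<Sum>c\<le>m. \<Sum>s\<in>UNIV. M c $ t $ s * vec_index V (c * CARD('n) + to_nat_on UNIV s))"
      unfolding row sum_lessThan_blocks by (intro sum.cong refl) (simp add: entry)
    then show ?thesis
      using True unfolding vec_block_def i_def
      by (simp add: sum_component matrix_vector_mult_def)
  next
    case False
    then have "CARD('n) \<le> b * CARD('n)" by simp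
    moreover have "(b - 1) * CARD('n) = b * CARD('n) - CARD('n)"
      by (simp add: diff_mult_distrib)
    ultimately have "\<not> i < CARD('n)" "i - CARD('n) = (b - 1) * CARD('n) + to_nat_on UNIV t"
      unfolding i_def by linarith+
    then have "vec_index (companion_mat m M *\<^sub>v V) i
        = (\<Sum>j < CARD('n) * (m + 1). if j = i - CARD('n) then vec_index V j else 0)"
      unfolding row using i by (intro sum.cong refl) (auto simp: companion_mat_def)
    also have "\<dots> = vec_index V ((b - 1) * CARD('n) + to_nat_on UNIV t)"
      using i \<open>i - CARD('n) = _\<close> by simp
    finally have "vec_index (companion_mat m M *\<^sub>v V) i = \<dots>" .
    then show ?thesis
      using False unfolding vec_block_def i_def by simp
  qed
qed

lemma companion_mat_carrier:
  "(companion_mat m (M :: nat \<Rightarrow> complex^'n^'n)) \<in> carrier_mat (CARD('n) * (m + 1)) (CARD('n) * (m + 1))"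
  unfolding companion_mat_def by simp

lemma stacked_state_carrier:
  "stacked_state m (y :: int \<Rightarrow> complex^'n) k \<in> carrier_vec (CARD('n) * (m + 1))"
  unfolding stacked_state_def by simp

lemma vec_block_stacked_state:
  fixes y :: "int \<Rightarrow> complex^'n"
  assumes "b \<le> m"
  shows "vec_block (stacked_state m y k) b = y (int k - int b)"
  using block_index_less[where 'n='n, OF assms] to_nat_on_UNIV_less[where 'n='n]
  by (simp add: vec_block_def stacked_state_def Finite_Cartesian_Product.vec_eq_iff)

lemma vec_block_smult:
  fixes V :: "complex vec"
  assumes "V \<in> carrier_vec (CARD('n) * (m + 1))" "b \<le> m"
  shows "(vec_block (c \<cdot>\<^sub>v V) b :: complex^'n) = c *s vec_block V b"
  using assms block_index_less[where 'n='n, OF assms(2)]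
  by (simp add: vec_block_def Finite_Cartesian_Product.vec_eq_iff)

lemma vec_block_zero:
  assumes "b \<le> m"
  shows "(vec_block (0\<^sub>v (CARD('n) * (m + 1))) b :: complex^'n) = 0"
  using block_index_less[where 'n='n, OF assms]
  by (simp add: vec_block_def Finite_Cartesian_Product.vec_eq_iff)

lemma companion_mat_mult_stacked_state:
  fixes M :: "nat \<Rightarrow> complex^'n^'n" and y :: "int \<Rightarrow> complex^'n"
  assumes "y (int k + 1) = (\<Sum>b\<le>m. M b *v y (int k - int b))"
  shows "companion_mat m M *\<^sub>v stacked_state m y k = stacked_state m y (Suc k)"
proof (rule vec_eq_from_blocks)
  fix b assume b: "b \<le> m"
  have "vec_block (companion_mat m M *\<^sub>v stacked_state m y k) b
      = (if b = 0 then (\<Sum>c\<le>m. M c *v vec_block (stacked_state m y k) c)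
         else vec_block (stacked_state m y k) (b - 1))"
    by (rule vec_block_companion_mat_mult[OF stacked_state_carrier b])
  also have "\<dots> = vec_block (stacked_state m y (Suc k)) b"
  proof (cases "b = 0")
    case True
    have "(\<Sum>c\<le>m. M c *v vec_block (stacked_state m y k) c) = (\<Sum>c\<le>m. M c *v y (int k - int c))"
      by (intro sum.cong) (simp_all add: vec_block_stacked_state)
    then show ?thesis using True assms by (simp add: vec_block_stacked_state add.commute)
  next
    case False
    then show ?thesis using b by (simp add: vec_block_stacked_state of_nat_diff algebra_simps)
  qed
  finally show "vec_block (companion_mat m M *\<^sub>v stacked_state m y k) b
      = (vec_block (stacked_state m y (Suc k)) b :: complex^'n)" .
qed (use companion_mat_carrier[of m M] stacked_state_carrier[of m y] in auto)

lemma companion_mat_eigenvalue: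
  fixes M :: "nat \<Rightarrow> complex^'n^'n"
  assumes "eigenvalue (companion_mat m M) \<xi>"
  shows "\<exists>w. w \<noteq> 0 \<and> \<xi> ^ (m + 1) *s w = (\<Sum>b\<le>m. \<xi> ^ (m - b) *s (M b *v w))"
proof -
  let ?D = "CARD('n) * (m + 1)"
  obtain v where v: "v \<in> carrier_vec ?D" "v \<noteq> 0\<^sub>v ?D" "companion_mat m M *\<^sub>v v = \<xi> \<cdot>\<^sub>v v"
    using assms companion_mat_carrier[of m M] unfolding eigenvalue_def eigenvector_def by auto
  define w where "w b = (vec_block v b :: complex^'n)" for b
  have block_eq: "(if b = 0 then (\<Sum>c\<le>m. M c *v w c) else w (b - 1)) = \<xi> *s w b"
    if "b \<le> m" for b
    using vec_block_companion_mat_mult[OF v(1) that, of M] vec_block_smult[OF v(1) that, of \<xi>] v(3)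
    unfolding w_def by simp
  have powers_from_top: "w (m - j) = \<xi> ^ j *s w m" if "j \<le> m" for j
    using that
  proof (induction j)
    case (Suc j)
    have "w (m - Suc j) = \<xi> *s w (m - j)"
      using block_eq[of "m - j"] Suc.prems by (simp add: Suc_diff_Suc)
    then show ?case using Suc by (simp add: vector_smult_assoc)
  qed simp
  have powers: "w b = \<xi> ^ (m - b) *s w m" if "b \<le> m" for b
    using powers_from_top[of "m - b"] that by simp
  have "w m \<noteq> 0"
  proof
    assume "w m = 0"
    then have "vec_block v b = (vec_block (0\<^sub>v ?D) b :: complex^'n)" if "b \<le> m" for b
      using powers[OF that] vec_block_zero[OF that] unfolding w_def by simp
    then have "v = 0\<^sub>v ?D" by (rule vec_eq_from_blocks[OF v(1) zero_carrier_vec])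
    with v(2) show False by simp
  qed
  moreover have "\<xi> ^ (m + 1) *s w m = (\<Sum>b\<le>m. \<xi> ^ (m - b) *s (M b *v w m))"
  proof -
    have "\<xi> ^ (m + 1) *s w m = \<xi> *s w 0"
      using powers[of 0] by (simp add: vector_smult_assoc)
    also have "\<dots> = (\<Sum>b\<le>m. M b *v w b)"
      using block_eq[of 0] by simp
    also have "\<dots> = (\<Sum>b\<le>m. \<xi> ^ (m - b) *s (M b *v w m))"
    proof (rule sum.cong)
      fix b assume "b \<in> {..m}"
      then show "M b *v w b = \<xi> ^ (m - b) *s (M b *v w m)"
        using powers[of b] by (simp add: vector_scalar_commute)
    qed simp
    finally show ?thesis .
  qed
  ultimately show ?thesis by blast
qed

lemma linear_recurrence_tendsto_zero:
  fixes M :: "nat \<Rightarrow> complex^'n^'n" and y :: "int \<Rightarrow> complex^'n"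
  assumes roots: "\<And>\<xi> w. w \<noteq> 0 \<Longrightarrow> \<xi> ^ (m + 1) *s w = (\<Sum>b\<le>m. \<xi> ^ (m - b) *s (M b *v w))
      \<Longrightarrow> cmod \<xi> < 1"
    and rec: "\<And>n. n \<ge> 0 \<Longrightarrow> y (n + 1) = (\<Sum>b\<le>m. M b *v y (n - int b))"
  shows "(\<lambda>k. y (int k)) \<longlonglongrightarrow> 0"
proof (rule vec_tendstoI)
  fix s :: 'n
  let ?T = "companion_mat m M" and ?i = "to_nat_on UNIV s"
  have states: "?T ^\<^sub>m k *\<^sub>v stacked_state m y j = stacked_state m y (k + j)" for k j
  proof (induction k arbitrary: j)
    case (Suc k)
    have "?T ^\<^sub>m Suc k *\<^sub>v stacked_state m y j = ?T ^\<^sub>m k *\<^sub>v (?T *\<^sub>v stacked_state m y j)"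
      by (simp add: assoc_mult_mat_vec[OF pow_carrier_mat[OF companion_mat_carrier]
            companion_mat_carrier stacked_state_carrier])
    also have "\<dots> = ?T ^\<^sub>m k *\<^sub>v stacked_state m y (Suc j)"
      using companion_mat_mult_stacked_state[OF rec[OF of_nat_0_le_iff]] by simp
    finally show ?case
      using Suc.IH[of "Suc j"] by simp
  qed (use companion_mat_carrier[of m M] stacked_state_carrier[of m y] in simp)
  have "?i < CARD('n) * (m + 1)"
    using block_index_less[of 0 m s] by simp
  then have "(\<lambda>k. vec_index (?T ^\<^sub>m k *\<^sub>v stacked_state m y 0) ?i) \<longlonglongrightarrow> 0"
    using companion_mat_eigenvalue roots
    by (intro pow_mat_mult_vec_tendsto_zero[OF companion_mat_carrier _ stacked_state_carrier]) blast
  moreover have "vec_index (stacked_state m y k) ?i = y (int k) $ s" for k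
    using vec_block_stacked_state[of 0 m y k] unfolding vec_block_def
    by (simp add: Finite_Cartesian_Product.vec_eq_iff)
  ultimately show "(\<lambda>k. y (int k) $ s) \<longlonglongrightarrow> 0 $ s"
    using states[of _ 0] by simp
qed

lemma matrix_vector_mult_sum:
  fixes M :: "'a :: semiring_1^'n^'m"
  shows "M *v (\<Sum>i\<in>I. f i) = (\<Sum>i\<in>I. M *v f i)"
  by (induction I rule: infinite_finite_induct) (simp_all add: matrix_vector_right_distrib)

lemma implicit_linear_recurrence_tendsto_zero:
  fixes G :: "complex^'n^'n" and C :: "nat \<Rightarrow> complex^'n^'n" and y :: "int \<Rightarrow> complex^'n"
  assumes G: "\<And>x. G *v x = 0 \<Longrightarrow> x = 0"
    and roots: "\<And>\<xi> w. w \<noteq> 0 \<Longrightarrow> \<xi> ^ (m + 1) *s (G *v w) = (\<Sum>b\<le>m. \<xi> ^ (m - b) *s (C b *v w))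
      \<Longrightarrow> cmod \<xi> < 1"
    and rec: "\<And>n. n \<ge> 0 \<Longrightarrow> G *v y (n + 1) = (\<Sum>b\<le>m. C b *v y (n - int b))"
  shows "(\<lambda>k. y (int k)) \<longlonglongrightarrow> 0"
proof -
  obtain H where H: "H ** G = Finite_Cartesian_Product.mat 1"
    using matrix_left_invertible_ker G by blast
  then have G_H: "G ** H = Finite_Cartesian_Product.mat 1"
    using matrix_left_right_inverse by blast
  show ?thesis
  proof (rule linear_recurrence_tendsto_zero[where M = "\<lambda>b. H ** C b"])
    fix \<xi> and w :: "complex^'n"
    assume "w \<noteq> 0" and eq: "\<xi> ^ (m + 1) *s w = (\<Sum>b\<le>m. \<xi> ^ (m - b) *s ((H ** C b) *v w))"
    have "\<xi> ^ (m + 1) *s (G *v w) = G *v (\<xi> ^ (m + 1) *s w)"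
      by (simp only: vector_scalar_commute)
    also have "\<dots> = G *v (\<Sum>b\<le>m. \<xi> ^ (m - b) *s ((H ** C b) *v w))"
      by (simp only: eq)
    also have "\<dots> = (\<Sum>b\<le>m. \<xi> ^ (m - b) *s (C b *v w))"
      by (simp add: matrix_vector_mult_sum vector_scalar_commute matrix_vector_mul_assoc
          matrix_mul_assoc G_H)
    finally show "cmod \<xi> < 1" using roots \<open>w \<noteq> 0\<close> by blast
  next
    fix n :: int assume "n \<ge> 0"
    then have "H *v (G *v y (n + 1)) = H *v (\<Sum>b\<le>m. C b *v y (n - int b))"
      using rec by simp
    then show "y (n + 1) = (\<Sum>b\<le>m. (H ** C b) *v y (n - int b))"
      by (simp add: matrix_vector_mult_sum matrix_vector_mul_assoc H)
  qed
qed

section \<open>Hermitian matrices and their real powers\<close>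

lemma scaleR_matrix_vector_assoc:
  fixes M :: "'a :: real_algebra_1^'n^'m"
  shows "(r *\<^sub>R M) *v x = r *\<^sub>R (M *v x)"
  by (simp add: matrix_vector_mult_def Finite_Cartesian_Product.vec_eq_iff scaleR_sum_right)

lemma matrix_vector_scaleR_commute:
  fixes M :: "'a :: real_algebra_1^'n^'m"
  shows "M *v (r *\<^sub>R x) = r *\<^sub>R (M *v x)"
  by (simp add: matrix_vector_mult_def Finite_Cartesian_Product.vec_eq_iff scaleR_sum_right)

definition cinner :: "complex^'n \<Rightarrow> complex^'n \<Rightarrow> complex" where
  "cinner x y = (\<Sum>i\<in>UNIV. cnj (x $ i) * y $ i)"

lemma qform_eq_cinner: "qform x M = cinner x (M *v x)"
  unfolding qform_def cinner_def ..

lemma cinner_zero_right [simp]: "cinner x 0 = 0"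
  unfolding cinner_def by simp

lemma cinner_add_left: "cinner (x + y) z = cinner x z + cinner y z"
  unfolding cinner_def by (simp add: distrib_right sum.distrib)

lemma cinner_add_right: "cinner x (y + z) = cinner x y + cinner x z"
  unfolding cinner_def by (simp add: distrib_left sum.distrib)

lemma cinner_diff_right: "cinner x (y - z) = cinner x y - cinner x z"
  unfolding cinner_def by (simp add: right_diff_distrib sum_subtractf)

lemma cinner_smult_left: "cinner (c *s x) y = cnj c * cinner x y"
  unfolding cinner_def by (simp add: sum_distrib_left ac_simps)

lemma cinner_smult_right: "cinner x (c *s y) = c * cinner x y"
  unfolding cinner_def by (simp add: sum_distrib_left ac_simps)

lemma of_real_smult_eq_scaleR: "complex_of_real r *s x = r *\<^sub>R x"
  unfolding scaleR_vec_def vector_scalar_mult_def by (simp add: scaleR_conv_of_real)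

lemma cinner_scaleR_left: "cinner (r *\<^sub>R x) y = complex_of_real r * cinner x y"
  unfolding of_real_smult_eq_scaleR[symmetric] cinner_smult_left by simp

lemma cinner_scaleR_right: "cinner x (r *\<^sub>R y) = complex_of_real r * cinner x y"
  unfolding of_real_smult_eq_scaleR[symmetric] cinner_smult_right ..

lemma cnj_cinner: "cnj (cinner x y) = cinner y x"
  unfolding cinner_def by (simp add: cnj_sum mult.commute)

lemma cinner_self: "cinner x x = complex_of_real ((norm x)\<^sup>2)"
proof -
  have "(norm x)\<^sup>2 = (\<Sum>i\<in>UNIV. (cmod (x $ i))\<^sup>2)"
    unfolding norm_vec_def L2_set_def by (simp add: sum_nonneg)
  then have "complex_of_real ((norm x)\<^sup>2) = (\<Sum>i\<in>UNIV. complex_of_real ((cmod (x $ i))\<^sup>2))"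
    by simp
  also have "\<dots> = cinner x x"
    unfolding cinner_def complex_norm_square by (simp add: mult.commute)
  finally show ?thesis by simp
qed

lemma cinner_adjoint_mat: "cinner x (M *v y) = cinner (adjoint_mat M *v x) y"
proof -
  have "cinner x (M *v y) = (\<Sum>i\<in>UNIV. \<Sum>j\<in>UNIV. cnj (x $ i) * M $ i $ j * y $ j)"
    unfolding cinner_def matrix_vector_mult_def by (simp add: sum_distrib_left mult.assoc)
  also have "\<dots> = (\<Sum>j\<in>UNIV. \<Sum>i\<in>UNIV. cnj (x $ i) * M $ i $ j * y $ j)"
    by (rule sum.swap)
  also have "\<dots> = cinner (adjoint_mat M *v x) y"
    unfolding cinner_def matrix_vector_mult_def adjoint_mat_def
    by (simp add: cnj_sum sum_distrib_right sum_distrib_left ac_simps)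
  finally show ?thesis .
qed

lemma cinner_hermitian: "hermitian_mat A \<Longrightarrow> cinner x (A *v y) = cinner (A *v x) y"
  using cinner_adjoint_mat[of x A y] unfolding hermitian_mat_def by simp

lemma hermitian_cinner_real:
  assumes "hermitian_mat A"
  shows "cinner x (A *v x) = complex_of_real (Re (cinner x (A *v x)))"
proof -
  have "cnj (cinner x (A *v x)) = cinner x (A *v x)"
    using cnj_cinner[of x "A *v x"] cinner_hermitian[OF assms, of x x] by simp
  then have "Im (cinner x (A *v x)) = 0" by (metis cnj.simps(2) neg_equal_zero)
  then show ?thesis by (simp add: complex_eq_iff)
qed

lemma sum_cmod_sq_eq_norm_sq: "(\<Sum>i\<in>UNIV. (cmod (x $ i))\<^sup>2) = (norm x)\<^sup>2"
  unfolding norm_vec_def L2_set_def by (simp add: sum_nonneg)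

lemma continuous_on_cinner_right: "continuous_on S (cinner a)"
  unfolding cinner_def by (intro continuous_intros continuous_on_component continuous_on_id)

lemma continuous_on_rayleigh: "continuous_on S (\<lambda>x. Re (cinner x (A *v x)))"
  unfolding cinner_def matrix_vector_mult_def
  by (simp, intro continuous_intros continuous_on_component continuous_on_id)

lemma eq_0_of_quadratic_bound:
  fixes n q l :: real
  assumes "n \<ge> 0" and bound: "\<And>t. t > 0 \<Longrightarrow> 2 * t * n + t\<^sup>2 * q \<le> l * t\<^sup>2 * n"
  shows "n = 0"
proof (rule ccontr)
  assume "n \<noteq> 0"
  with assms(1) have n: "n > 0" by simp
  define C where "C = \<bar>l * n - q\<bar> + 1"
  have C: "C > 0" unfolding C_def by simp
  define t where "t = n / C"
  have t: "t > 0" unfolding t_def using n C by simp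
  have "t * (2 * n) \<le> t * (t * (l * n - q))"
    using bound[OF t] by (simp add: algebra_simps power2_eq_square)
  then have "2 * n \<le> t * (l * n - q)" using t by simp
  also have "\<dots> < t * C"
    using t unfolding C_def by (intro mult_strict_left_mono) auto
  also have "\<dots> = n" unfolding t_def using C by simp
  finally show False using n by simp
qed

lemma rayleigh_le_max:
  fixes A :: "complex^'n^'n"
  assumes W: "Real_Vector_Spaces.subspace W" and x: "x \<in> W"
    and max: "\<And>x. x \<in> W \<Longrightarrow> norm x = 1 \<Longrightarrow> Re (cinner x (A *v x)) \<le> l"
  shows "Re (cinner x (A *v x)) \<le> l * (norm x)\<^sup>2"
proof (cases "x = 0")
  case False
  define x' where "x' = (1 / norm x) *\<^sub>R x"
  have "x' \<in> W" "norm x' = 1"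
    unfolding x'_def using real_vector.subspace_scale[OF W x] False by auto
  then have "Re (cinner x' (A *v x')) \<le> l" by (rule max)
  moreover have "Re (cinner x' (A *v x')) = Re (cinner x (A *v x)) / (norm x)\<^sup>2"
    unfolding x'_def matrix_vector_scaleR_commute cinner_scaleR_left cinner_scaleR_right
    by (simp add: power2_eq_square)
  ultimately show ?thesis
    using False by (simp add: field_simps)
qed simp

text \<open>Perturbing the maximizer z in the direction y = A z - l z, which is orthogonal to z,
  increases the Rayleigh quotient at first order by 2 t |y|^2; maximality forces y = 0.\<close>
lemma rayleigh_maximizer_eigenvector:
  fixes A :: "complex^'n^'n"
  assumes h: "hermitian_mat A" and W: "Real_Vector_Spaces.subspace W" and AW: "\<And>x. x \<in> W \<Longrightarrow> A *v x \<in> W"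
    and z: "z \<in> W" "norm z = 1"
    and max: "\<And>x. x \<in> W \<Longrightarrow> norm x = 1 \<Longrightarrow> Re (cinner x (A *v x)) \<le> Re (cinner z (A *v z))"
  shows "A *v z = Re (cinner z (A *v z)) *\<^sub>R z"
proof -
  define l where "l = Re (cinner z (A *v z))"
  define y where "y = A *v z - l *\<^sub>R z"
  have zAz: "cinner z (A *v z) = complex_of_real l"
    unfolding l_def by (rule hermitian_cinner_real[OF h])
  have zz: "cinner z z = 1" using z(2) by (simp add: cinner_self)
  have "y \<in> W" unfolding y_def using W z AW by (intro real_vector.subspace_diff real_vector.subspace_scale) auto
  have zy: "cinner z y = 0"
    unfolding y_def cinner_diff_right cinner_scaleR_right zAz zz by simp
  then have yz: "cinner y z = 0"
    using cnj_cinner[of z y] by simp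
  have "A *v z = y + l *\<^sub>R z" unfolding y_def by simp
  then have yAz: "cinner y (A *v z) = cinner y y"
    by (simp add: cinner_add_right cinner_scaleR_right yz)
  have zAy: "cinner z (A *v y) = cinner y y"
    using cinner_hermitian[OF h, of z y] cnj_cinner[of y "A *v z"] cnj_cinner[of y y]
    by (simp add: yAz)
  define n where "n = (norm y)\<^sup>2"
  have yy: "cinner y y = complex_of_real n" unfolding n_def by (rule cinner_self)
  define q where "q = Re (cinner y (A *v y))"
  have "2 * t * n + t\<^sup>2 * q \<le> l * t\<^sup>2 * n" if t: "t > 0" for t
  proof -
    define w where "w = z + t *\<^sub>R y"
    have "w \<in> W" unfolding w_def using W z \<open>y \<in> W\<close> by (intro real_vector.subspace_add real_vector.subspace_scale) auto
    have "(norm w)\<^sup>2 = Re (cinner w w)" by (simp add: cinner_self)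
    also have "\<dots> = 1 + t\<^sup>2 * n"
      unfolding w_def by (simp add: cinner_add_left cinner_add_right cinner_scaleR_left
          cinner_scaleR_right zz zy yz yy power2_eq_square)
    finally have nw: "(norm w)\<^sup>2 = 1 + t\<^sup>2 * n" .
    have "Re (cinner w (A *v w)) = l + 2 * t * n + t\<^sup>2 * q"
      unfolding w_def q_def
      by (simp add: matrix_vector_right_distrib matrix_vector_scaleR_commute cinner_add_left
          cinner_add_right cinner_scaleR_left cinner_scaleR_right zAz zAy yAz yy power2_eq_square)
         (simp add: algebra_simps)
    moreover have "Re (cinner w (A *v w)) \<le> l * (norm w)\<^sup>2"
      using rayleigh_le_max[OF W \<open>w \<in> W\<close> max] unfolding l_def .
    ultimately show ?thesis unfolding nw by (simp add: algebra_simps)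
  qed
  then have "n = 0" by (intro eq_0_of_quadratic_bound[of n q l]) (simp_all add: n_def)
  then have "y = 0" unfolding n_def by simp
  then show ?thesis unfolding y_def l_def by simp
qed

lemma orthogonal_complement_nonzero:
  fixes e :: "'n \<Rightarrow> complex^'n"
  assumes "j \<notin> S"
  obtains x where "x \<noteq> 0" "\<forall>i\<in>S. cinner (e i) x = 0"
proof -
  define E :: "complex^'n^'n" where "E = (\<chi> i k. if i \<in> S then cnj (e i $ k) else 0)"
  have Ex: "(E *v x) $ i = (if i \<in> S then cinner (e i) x else 0)" for x i
    unfolding E_def cinner_def matrix_vector_mult_def by simp
  have "\<not> (\<forall>x. E *v x = 0 \<longrightarrow> x = 0)"
  proof
    assume "\<forall>x. E *v x = 0 \<longrightarrow> x = 0"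
    then obtain F where "F ** E = Finite_Cartesian_Product.mat 1"
      using matrix_left_invertible_ker by blast
    then have "E ** F = Finite_Cartesian_Product.mat 1"
      using matrix_left_right_inverse by blast
    then have "(E ** F) $ j $ j = 1" by (simp add: Finite_Cartesian_Product.mat_def)
    moreover have "(E ** F) $ j $ j = 0"
      using assms unfolding E_def matrix_matrix_mult_def by simp
    ultimately show False by simp
  qed
  then obtain x where "x \<noteq> 0" "E *v x = 0" by blast
  then show ?thesis
    using that Ex by (metis (no_types, lifting) Finite_Cartesian_Product.vec_eq_iff zero_index)
qed

lemma hermitian_eigenvector_orthogonal:
  fixes A :: "complex^'n^'n" and e :: "'n \<Rightarrow> complex^'n"
  assumes h: "hermitian_mat A" and j: "j \<notin> S"
    and eig: "\<forall>i\<in>S. A *v e i = l i *s e i"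
  obtains x \<mu> where "norm x = 1" "\<forall>i\<in>S. cinner (e i) x = 0" "A *v x = \<mu> *s x"
proof -
  define W where "W = {x. \<forall>i\<in>S. cinner (e i) x = 0}"
  have W: "Real_Vector_Spaces.subspace W"
    unfolding W_def Real_Vector_Spaces.subspace_def
    by (simp add: cinner_add_right cinner_scaleR_right)
  have AW: "A *v x \<in> W" if "x \<in> W" for x
  proof -
    have "cinner (e i) (A *v x) = cnj (l i) * cinner (e i) x" if "i \<in> S" for i
      using eig that by (simp add: cinner_hermitian[OF h] cinner_smult_left)
    then show ?thesis using \<open>x \<in> W\<close> unfolding W_def by simp
  qed
  obtain x0 where "x0 \<noteq> 0" "x0 \<in> W"
    using orthogonal_complement_nonzero[OF j] unfolding W_def by blast
  then have "(1 / norm x0) *\<^sub>R x0 \<in> sphere 0 1 \<inter> W"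
    using real_vector.subspace_scale[OF W] by simp
  moreover have "closed W"
  proof -
    have "closed (\<Inter>i\<in>S. {x. cinner (e i) x = 0})"
      by (intro closed_INT ballI closed_Collect_eq continuous_on_cinner_right continuous_on_const)
    moreover have "W = (\<Inter>i\<in>S. {x. cinner (e i) x = 0})" unfolding W_def by auto
    ultimately show ?thesis by simp
  qed
  ultimately obtain z where z: "z \<in> sphere 0 1 \<inter> W"
    and zmax: "\<forall>x \<in> sphere 0 1 \<inter> W. Re (cinner x (A *v x)) \<le> Re (cinner z (A *v z))"
    using continuous_attains_sup[OF compact_Int_closed[OF compact_sphere] _ continuous_on_rayleigh]
    by blast
  have "A *v z = Re (cinner z (A *v z)) *\<^sub>R z"
    using z zmax by (intro rayleigh_maximizer_eigenvector[OF h W AW]) auto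
  then show ?thesis
    using that z unfolding W_def of_real_smult_eq_scaleR[symmetric] by auto
qed

lemma hermitian_orthonormal_eigenvectors:
  fixes A :: "complex^'n^'n"
  assumes h: "hermitian_mat A" and "finite S"
  shows "\<exists>(e :: 'n \<Rightarrow> complex^'n) l. (\<forall>i\<in>S. \<forall>j\<in>S. cinner (e i) (e j) = (if i = j then 1 else 0))
    \<and> (\<forall>i\<in>S. A *v e i = l i *s e i)"
  using \<open>finite S\<close>
proof (induction S rule: finite_induct)
  case (insert j S)
  then obtain e l where orth: "\<forall>i\<in>S. \<forall>k\<in>S. cinner (e i) (e k) = (if i = k then 1 else 0)"
    and eig: "\<forall>i\<in>S. A *v e i = l i *s e i" by blast
  obtain x \<mu> where x: "norm x = 1" "\<forall>i\<in>S. cinner (e i) x = 0" "A *v x = \<mu> *s x"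
    using hermitian_eigenvector_orthogonal[OF h insert(2) eig] by blast
  have "cinner x x = 1" using x(1) by (simp add: cinner_self)
  moreover have "cinner x (e i) = 0" if "i \<in> S" for i
    using x(2) that cnj_cinner[of "e i" x] by simp
  ultimately show ?case
    using orth eig x insert(2) by (intro exI[of _ "e(j := x)"] exI[of _ "l(j := \<mu>)"]) auto
qed simp

lemma pos_def_mat_spectral_decomposition:
  fixes A :: "complex^'n^'n"
  assumes pd: "pos_def_mat A"
  obtains U and d :: "'n \<Rightarrow> real" where "unitary_mat U" "\<forall>i. d i > 0"
    "A = U ** Defs.diag_mat (\<lambda>i. complex_of_real (d i)) ** adjoint_mat U"
proof -
  have h: "hermitian_mat A" using pd unfolding pos_def_mat_def by simp
  obtain e :: "'n \<Rightarrow> complex^'n" and l where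
    orth: "\<And>i j. cinner (e i) (e j) = (if i = j then 1 else 0)" and eig: "\<And>i. A *v e i = l i *s e i"
    using hermitian_orthonormal_eigenvectors[OF h, of UNIV] by auto
  define U :: "complex^'n^'n" where "U = (\<chi> r c. e c $ r)"
  have U: "adjoint_mat U ** U = Finite_Cartesian_Product.mat 1"
    using orth
    unfolding U_def adjoint_mat_def matrix_matrix_mult_def Finite_Cartesian_Product.mat_def cinner_def
    by (simp add: Finite_Cartesian_Product.vec_eq_iff)
  then have U': "U ** adjoint_mat U = Finite_Cartesian_Product.mat 1"
    using matrix_left_right_inverse by blast
  define d where "d i = Re (l i)" for i
  have l: "l i = complex_of_real (d i)" and d: "d i > 0" for i
  proof -
    have "cinner (e i) (e i) = 1" using orth by simp
    then have "e i \<noteq> 0" and q: "qform (e i) A = l i"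
      by (auto simp: qform_eq_cinner eig cinner_smult_right)
    then have "Re (l i) > 0" using pd unfolding pos_def_mat_def by auto
    moreover have "l i = complex_of_real (Re (l i))"
      using hermitian_cinner_real[OF h, of "e i"] q by (simp add: qform_eq_cinner)
    ultimately show "l i = complex_of_real (d i)" "d i > 0" unfolding d_def by simp_all
  qed
  have AU: "A ** U = U ** Defs.diag_mat (\<lambda>i. complex_of_real (d i))"
  proof -
    have "(A ** U) $ r $ c = (A *v e c) $ r" for r c
      unfolding U_def matrix_matrix_mult_def matrix_vector_mult_def by simp
    moreover have "(U ** Defs.diag_mat (\<lambda>i. complex_of_real (d i))) $ r $ c = complex_of_real (d c) * e c $ r"
      for r c
      unfolding U_def matrix_matrix_mult_def Defs.diag_mat_def
      by (simp add: if_distrib[of "\<lambda>x. _ * x"] sum.delta' cong: if_cong)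
    ultimately show ?thesis unfolding eig l by (simp add: Finite_Cartesian_Product.vec_eq_iff)
  qed
  have "A = A ** (U ** adjoint_mat U)" unfolding U' by simp
  also have "\<dots> = U ** Defs.diag_mat (\<lambda>i. complex_of_real (d i)) ** adjoint_mat U"
    by (simp add: matrix_mul_assoc AU)
  finally show ?thesis
    using that U d unfolding unitary_mat_def by blast
qed

lemma diag_mat_mult_index: "(Defs.diag_mat f ** M) $ i $ j = f i * M $ i $ j"
  unfolding Defs.diag_mat_def matrix_matrix_mult_def
  by (simp add: if_distrib[of "\<lambda>x. x * _"] sum.delta cong: if_cong)

lemma mult_diag_mat_index: "(M ** Defs.diag_mat f) $ i $ j = M $ i $ j * f j"
  unfolding Defs.diag_mat_def matrix_matrix_mult_def
  by (simp add: if_distrib[of "\<lambda>x. _ * x"] sum.delta' cong: if_cong)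

lemma diag_mat_mult: "Defs.diag_mat f ** Defs.diag_mat g = Defs.diag_mat (\<lambda>i. f i * g i)"
  unfolding Finite_Cartesian_Product.vec_eq_iff diag_mat_mult_index by (simp add: Defs.diag_mat_def)

lemma diag_mat_one: "Defs.diag_mat (\<lambda>i. 1) = Finite_Cartesian_Product.mat 1"
  unfolding Defs.diag_mat_def Finite_Cartesian_Product.mat_def by simp

lemma adjoint_mat_mult: "adjoint_mat (X ** Y) = adjoint_mat Y ** adjoint_mat X"
  unfolding adjoint_mat_def matrix_matrix_mult_def
  by (simp add: Finite_Cartesian_Product.vec_eq_iff cnj_sum mult.commute)

lemma adjoint_mat_adjoint_mat: "adjoint_mat (adjoint_mat X) = X"
  unfolding adjoint_mat_def by (simp add: Finite_Cartesian_Product.vec_eq_iff)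

lemma adjoint_diag_mat_of_real:
  "adjoint_mat (Defs.diag_mat (\<lambda>i. complex_of_real (f i))) = Defs.diag_mat (\<lambda>i. complex_of_real (f i))"
  unfolding adjoint_mat_def Defs.diag_mat_def by (simp add: Finite_Cartesian_Product.vec_eq_iff)

lemma unitary_mat_right_inverse: "unitary_mat U \<Longrightarrow> U ** adjoint_mat U = Finite_Cartesian_Product.mat 1"
  unfolding unitary_mat_def using matrix_left_right_inverse by blast

definition spectral_rpow :: "complex^'n^'n \<Rightarrow> ('n \<Rightarrow> real) \<Rightarrow> real \<Rightarrow> complex^'n^'n" where
  "spectral_rpow U d s = U ** Defs.diag_mat (\<lambda>i. complex_of_real (d i powr s)) ** adjoint_mat U"

lemma spectral_rpow_add:
  assumes "unitary_mat U" and "\<forall>i. d i > 0"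
  shows "spectral_rpow U d s ** spectral_rpow U d t = spectral_rpow U d (s + t)"
proof -
  have "spectral_rpow U d s ** spectral_rpow U d t
      = U ** (Defs.diag_mat (\<lambda>i. complex_of_real (d i powr s)) ** (adjoint_mat U ** U)
          ** Defs.diag_mat (\<lambda>i. complex_of_real (d i powr t))) ** adjoint_mat U"
    unfolding spectral_rpow_def by (simp add: matrix_mul_assoc)
  also have "\<dots> = spectral_rpow U d (s + t)"
    using assms unfolding unitary_mat_def spectral_rpow_def by (simp add: diag_mat_mult powr_add)
  finally show ?thesis .
qed

lemma spectral_rpow_zero:
  assumes "unitary_mat U" and "\<forall>i. d i > 0"
  shows "spectral_rpow U d 0 = Finite_Cartesian_Product.mat 1"
  using assms unitary_mat_right_inverse[OF assms(1)] unfolding spectral_rpow_def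
  by (simp add: less_imp_neq[symmetric] diag_mat_one)

lemma spectral_rpow_one:
  assumes "\<forall>i. d i > 0"
  shows "spectral_rpow U d 1 = U ** Defs.diag_mat (\<lambda>i. complex_of_real (d i)) ** adjoint_mat U"
  using assms unfolding spectral_rpow_def by (simp add: less_imp_le)

lemma adjoint_spectral_rpow: "adjoint_mat (spectral_rpow U d s) = spectral_rpow U d s"
  unfolding spectral_rpow_def
  by (simp add: adjoint_mat_mult adjoint_mat_adjoint_mat adjoint_diag_mat_of_real matrix_mul_assoc)

text \<open>W = U^* U' intertwines the two diagonal factors; since W i j \<noteq> 0 forces d i = d' j,
  it also intertwines their powers.\<close>
lemma spectral_rpow_unique:
  assumes U: "unitary_mat U" and U': "unitary_mat U'"
    and eq: "U ** Defs.diag_mat (\<lambda>i. complex_of_real (d i)) ** adjoint_mat U =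
             U' ** Defs.diag_mat (\<lambda>i. complex_of_real (d' i)) ** adjoint_mat U'"
  shows "spectral_rpow U d s = spectral_rpow U' d' s"
proof -
  let ?D = "Defs.diag_mat (\<lambda>i. complex_of_real (d i))"
  let ?D' = "Defs.diag_mat (\<lambda>i. complex_of_real (d' i))"
  let ?Ds = "Defs.diag_mat (\<lambda>i. complex_of_real (d i powr s))"
  let ?Ds' = "Defs.diag_mat (\<lambda>i. complex_of_real (d' i powr s))"
  define W where "W = adjoint_mat U ** U'"
  have "?D ** W = adjoint_mat U ** (U ** ?D ** adjoint_mat U) ** U'"
    using U unfolding W_def unitary_mat_def by (simp add: matrix_mul_assoc)
  also have "\<dots> = W ** ?D'"
    using U' unfolding eq W_def unitary_mat_def by (simp add: matrix_mul_assoc[symmetric])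
  finally have DW: "?D ** W = W ** ?D'" .
  have DWs: "?Ds ** W = W ** ?Ds'"
  proof -
    have "(?Ds ** W) $ i $ j = (W ** ?Ds') $ i $ j" for i j
    proof -
      have "complex_of_real (d i) * W $ i $ j = W $ i $ j * complex_of_real (d' j)"
        using arg_cong[OF DW, of "\<lambda>M. M $ i $ j"] unfolding diag_mat_mult_index mult_diag_mat_index .
      then have "W $ i $ j = 0 \<or> d i = d' j" by (auto simp: mult.commute)
      then show ?thesis unfolding diag_mat_mult_index mult_diag_mat_index by (auto simp: mult.commute)
    qed
    then show ?thesis by (simp add: Finite_Cartesian_Product.vec_eq_iff)
  qed
  have "spectral_rpow U d s = U ** ?Ds ** (W ** adjoint_mat U')"
    unfolding spectral_rpow_def W_def using unitary_mat_right_inverse[OF U']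
    by (simp add: matrix_mul_assoc[symmetric])
  also have "\<dots> = U ** (?Ds ** W) ** adjoint_mat U'"
    by (simp add: matrix_mul_assoc)
  also have "\<dots> = (U ** adjoint_mat U) ** U' ** ?Ds' ** adjoint_mat U'"
    unfolding DWs unfolding W_def by (simp add: matrix_mul_assoc)
  also have "\<dots> = spectral_rpow U' d' s"
    unfolding unitary_mat_right_inverse[OF U] spectral_rpow_def by simp
  finally show ?thesis .
qed

lemma mat_rpow_eq_spectral_rpow:
  assumes U: "unitary_mat U" and d: "\<forall>i. d i > 0"
    and A: "A = U ** Defs.diag_mat (\<lambda>i. complex_of_real (d i)) ** adjoint_mat U"
  shows "mat_rpow A s = spectral_rpow U d s"
proof -
  have "\<exists>U' (d' :: 'a \<Rightarrow> real). unitary_mat U' \<and> (\<forall>i. d' i > 0) \<and>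
      A = U' ** Defs.diag_mat (\<lambda>i. complex_of_real (d' i)) ** adjoint_mat U' \<and>
      mat_rpow A s = spectral_rpow U' d' s"
    unfolding mat_rpow_def spectral_rpow_def
    by (rule someI_ex) (use U d A in blast)
  then obtain U' d' where "unitary_mat U'"
    "A = U' ** Defs.diag_mat (\<lambda>i. complex_of_real (d' i)) ** adjoint_mat U'"
    "mat_rpow A s = spectral_rpow U' d' s" by blast
  then show ?thesis using spectral_rpow_unique[OF U] A by metis
qed

context
  fixes A :: "complex^'n^'n"
  assumes pd: "pos_def_mat A"
begin

lemma mat_rpow_add: "mat_rpow A s ** mat_rpow A t = mat_rpow A (s + t)"
  using pd by (rule pos_def_mat_spectral_decomposition) (simp add: mat_rpow_eq_spectral_rpow spectral_rpow_add)

lemma mat_rpow_zero: "mat_rpow A 0 = Finite_Cartesian_Product.mat 1"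
  using pd by (rule pos_def_mat_spectral_decomposition) (simp add: mat_rpow_eq_spectral_rpow spectral_rpow_zero)

lemma mat_rpow_one: "mat_rpow A 1 = A"
  using pd by (rule pos_def_mat_spectral_decomposition) (simp add: mat_rpow_eq_spectral_rpow spectral_rpow_one)

lemma adjoint_mat_rpow: "adjoint_mat (mat_rpow A s) = mat_rpow A s"
  using pd by (rule pos_def_mat_spectral_decomposition) (simp add: mat_rpow_eq_spectral_rpow adjoint_spectral_rpow)

lemma mat_rpow_mult_vec: "mat_rpow A s *v (mat_rpow A t *v x) = mat_rpow A (s + t) *v x"
  by (simp add: matrix_vector_mul_assoc mat_rpow_add)

lemma cinner_mat_rpow:
  "cinner (mat_rpow A s *v x) (mat_rpow A t *v y) = cinner x (mat_rpow A (s + t) *v y)"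
proof -
  have "cinner (mat_rpow A s *v x) (mat_rpow A t *v y)
      = cinner (adjoint_mat (mat_rpow A s) *v x) (mat_rpow A t *v y)"
    by (simp add: adjoint_mat_rpow)
  also have "\<dots> = cinner x (mat_rpow A (s + t) *v y)"
    by (simp add: cinner_adjoint_mat[symmetric] mat_rpow_mult_vec)
  finally show ?thesis .
qed

lemma mat_rpow_mult_vec_eq_0_iff: "mat_rpow A s *v x = 0 \<longleftrightarrow> x = 0"
  using mat_rpow_mult_vec[of "- s" s x] by (auto simp: mat_rpow_zero)

end

lemma rayleigh_quotient_in_field_of_values:
  assumes "w \<noteq> 0"
  shows "cinner w (M *v w) / cinner w w \<in> field_of_values M"
proof -
  define x where "x = (1 / norm w) *\<^sub>R w"
  have "(\<Sum>i\<in>UNIV. (cmod (x $ i))\<^sup>2) = 1"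
    unfolding sum_cmod_sq_eq_norm_sq x_def using assms by simp
  moreover have "qform x M = cinner w (M *v w) / cinner w w"
    unfolding qform_eq_cinner x_def matrix_vector_scaleR_commute cinner_scaleR_left cinner_scaleR_right
    by (simp add: cinner_self power2_eq_square)
  ultimately show ?thesis
    unfolding field_of_values_def by (intro CollectI exI[of _ x]) simp
qed

lemma eigen_equation_field_of_values:
  fixes A B :: "complex^'n^'n" and a b c :: complex and h p :: real
  assumes pd: "pos_def_mat A" and v: "v \<noteq> 0"
    and eq: "a *s v + (of_real h * c) *s (A *v v) = (of_real h * b) *s (B *v v)"
  obtains z \<mu> where "z \<in> field_of_values A"
    and "\<mu> \<in> field_of_values (mat_rpow A (p / 2 - 1) ** B ** mat_rpow A (- p / 2))"
    and "a = (- of_real h * z) * c - (- of_real h * z) * \<mu> * b"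
proof -
  let ?F = "mat_rpow A" and ?M = "mat_rpow A (p / 2 - 1) ** B ** mat_rpow A (- p / 2)"
  define w1 where "w1 = ?F (p / 2) *v v"
  define w2 where "w2 = ?F ((p - 1) / 2) *v v"
  define \<alpha> where "\<alpha> = cinner v (?F (p - 1) *v v)"
  define \<beta> where "\<beta> = cinner v (?F p *v v)"
  define K where "K = cinner (?F (p - 1) *v v) (B *v v)"
  have F0: "?F 0 *v x = x" and F1: "?F 1 *v x = A *v x" for x
    by (simp_all add: mat_rpow_zero[OF pd] mat_rpow_one[OF pd])
  have test_vector: "cinner (?F (p - 1) *v v) x = cinner v (?F (p - 1) *v x)" for x
    using cinner_mat_rpow[OF pd, of "p - 1" v 0 x] by (simp add: F0)
  have w2w2: "cinner w2 w2 = \<alpha>"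
    unfolding w2_def \<alpha>_def cinner_mat_rpow[OF pd] by simp
  have "cinner w2 (A *v w2) = cinner w2 (?F (1 + (p - 1) / 2) *v v)"
    unfolding w2_def F1[symmetric] mat_rpow_mult_vec[OF pd] ..
  then have w2Aw2: "cinner w2 (A *v w2) = \<beta>"
    unfolding w2_def \<beta>_def cinner_mat_rpow[OF pd] by (simp add: field_simps)
  have w1w1: "cinner w1 w1 = \<beta>"
    unfolding w1_def \<beta>_def cinner_mat_rpow[OF pd] by simp
  have "?M *v w1 = ?F (p / 2 - 1) *v (B *v v)"
    unfolding w1_def by (simp add: matrix_vector_mul_assoc[symmetric] mat_rpow_mult_vec[OF pd] F0)
  then have "cinner w1 (?M *v w1) = cinner (?F (p / 2) *v v) (?F (p / 2 - 1) *v (B *v v))"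
    unfolding w1_def by simp
  also have "\<dots> = K"
    unfolding K_def test_vector cinner_mat_rpow[OF pd] by simp
  finally have w1Mw1: "cinner w1 (?M *v w1) = K" .
  have "w1 \<noteq> 0" "w2 \<noteq> 0"
    using v unfolding w1_def w2_def by (simp_all add: mat_rpow_mult_vec_eq_0_iff[OF pd])
  then have "\<alpha> \<noteq> 0" "\<beta> \<noteq> 0"
    unfolding w1w1[symmetric] w2w2[symmetric] cinner_self by simp_all
  have "cinner (?F (p - 1) *v v) v = \<alpha>" "cinner (?F (p - 1) *v v) (A *v v) = \<beta>"
    unfolding \<alpha>_def \<beta>_def test_vector F1[symmetric] mat_rpow_mult_vec[OF pd] by (simp_all add: F0)
  then have scalar_eq: "a * \<alpha> + of_real h * c * \<beta> = of_real h * b * K"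
    using arg_cong[OF eq, of "cinner (?F (p - 1) *v v)"] unfolding K_def
    by (simp add: cinner_add_right cinner_smult_right)
  show ?thesis
  proof
    show "cinner w2 (A *v w2) / cinner w2 w2 \<in> field_of_values A"
      by (rule rayleigh_quotient_in_field_of_values) fact
    show "cinner w1 (?M *v w1) / cinner w1 w1 \<in> field_of_values ?M"
      by (rule rayleigh_quotient_in_field_of_values) fact
    show "a = (- of_real h * (cinner w2 (A *v w2) / cinner w2 w2)) * c
        - (- of_real h * (cinner w2 (A *v w2) / cinner w2 w2)) * (cinner w1 (?M *v w1) / cinner w1 w1) * b"
      unfolding w2w2 w2Aw2 w1w1 w1Mw1 using \<open>\<alpha> \<noteq> 0\<close> \<open>\<beta> \<noteq> 0\<close> scalar_eq
      by (simp add: field_simps)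
  qed
qed

section \<open>The \<theta>-method\<close>

lemma scaleR_complex_eq_mult: "r *\<^sub>R (z :: complex) = complex_of_real r * z"
  by (rule scaleR_conv_of_real)

text \<open>In the \<theta>-step, y(n-b) enters the interpolated delay terms with this weight.\<close>
definition theta_delay_weight :: "real \<Rightarrow> real \<Rightarrow> nat \<Rightarrow> real \<Rightarrow> nat \<Rightarrow> real" where
  "theta_delay_weight \<theta> u m h b = h *
     ((if b = m then (1 - \<theta>) * (1 - u) else 0)
      + (if b + 1 = m then (1 - \<theta>) * u + \<theta> * (1 - u) else 0)
      + (if b + 2 = m then \<theta> * u else 0))"

definition theta_implicit_mat :: "complex^'n^'n \<Rightarrow> real \<Rightarrow> real \<Rightarrow> complex^'n^'n" where
  "theta_implicit_mat A \<theta> h = Finite_Cartesian_Product.mat 1 + (h * \<theta>) *\<^sub>R A"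

definition theta_coeff_mat :: "complex^'n^'n \<Rightarrow> complex^'n^'n \<Rightarrow> real \<Rightarrow> real \<Rightarrow> nat \<Rightarrow> real
    \<Rightarrow> nat \<Rightarrow> complex^'n^'n" where
  "theta_coeff_mat A B \<theta> u m h b =
     (if b = 0 then Finite_Cartesian_Product.mat 1 - (h * (1 - \<theta>)) *\<^sub>R A else 0) + theta_delay_weight \<theta> u m h b *\<^sub>R B"

lemma sum_theta_delay_weight:
  fixes v :: "nat \<Rightarrow> 'a :: real_vector"
  assumes "m \<ge> 1" and "2 \<le> m \<or> u = 0"
  shows "(\<Sum>b\<le>m. theta_delay_weight \<theta> u m h b *\<^sub>R v b)
    = (h * (1 - \<theta>) * (1 - u)) *\<^sub>R v m + (h * ((1 - \<theta>) * u + \<theta> * (1 - u))) *\<^sub>R v (m - 1)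
      + (h * \<theta> * u) *\<^sub>R v (m - 2)"
proof -
  have shift: "(b + 1 = m) = (b = m - 1)" "(b + 2 = m) = (b = m - 2 \<and> 2 \<le> m)" for b
    using assms(1) by auto
  let ?k1 = "h * (1 - \<theta>) * (1 - u)" and ?k2 = "h * ((1 - \<theta>) * u + \<theta> * (1 - u))"
    and ?k3 = "h * \<theta> * u"
  have "theta_delay_weight \<theta> u m h b *\<^sub>R v b = (if b = m then ?k1 *\<^sub>R v b else 0)
      + (if b = m - 1 then ?k2 *\<^sub>R v b else 0) + (if b = m - 2 \<and> 2 \<le> m then ?k3 *\<^sub>R v b else 0)"
    for b
    unfolding theta_delay_weight_def shift by (simp add: scaleR_add_left algebra_simps)
  moreover have "(\<Sum>b\<le>m. if b = m - 2 \<and> 2 \<le> m then ?k3 *\<^sub>R v b else 0) = ?k3 *\<^sub>R v (m - 2)"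
    using assms(2) by (cases "2 \<le> m") auto
  ultimately show ?thesis
    by (simp add: sum.distrib)
qed

lemma sum_theta_coeff_mat:
  "(\<Sum>b\<le>m. theta_coeff_mat A B \<theta> u m h b *v z b)
     = z 0 - (h * (1 - \<theta>)) *\<^sub>R (A *v z 0) + (\<Sum>b\<le>m. theta_delay_weight \<theta> u m h b *\<^sub>R (B *v z b))"
  unfolding theta_coeff_mat_def
  by (simp add: matrix_vector_mult_add_rdistrib matrix_vector_mult_diff_rdistrib sum.distrib
      scaleR_matrix_vector_assoc if_distrib[of "\<lambda>M. M *v _"] cong: if_cong)

lemma theta_step_recurrence:
  assumes step: "theta_step A B \<theta> u m h y n" and m: "m \<ge> 1" and mu: "2 \<le> m \<or> u = 0"
  shows "theta_implicit_mat A \<theta> h *v y (n + 1) = (\<Sum>b\<le>m. theta_coeff_mat A B \<theta> u m h b *v y (n - int b))"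
proof -
  have delays: "(\<Sum>b\<le>m. theta_delay_weight \<theta> u m h b *\<^sub>R (B *v y (n - int b)))
     = (h * (1 - \<theta>) * (1 - u)) *\<^sub>R (B *v y (n - int m))
       + (h * ((1 - \<theta>) * u + \<theta> * (1 - u))) *\<^sub>R (B *v y (n - int m + 1))
       + (h * \<theta> * u) *\<^sub>R (B *v y (n - int m + 2))"
  proof (cases "2 \<le> m")
    case True
    then show ?thesis
      using sum_theta_delay_weight[OF m mu, where v="\<lambda>b. B *v y (n - int b)"]
      by (simp add: of_nat_diff algebra_simps)
  next
    case False
    then have "m = 1" "u = 0" using m mu by auto
    then show ?thesis by (simp add: theta_delay_weight_def)
  qed
  have "theta_implicit_mat A \<theta> h *v y (n + 1) = y (n + 1) + (h * \<theta>) *\<^sub>R (A *v y (n + 1))"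
    by (simp add: theta_implicit_mat_def matrix_vector_mult_add_rdistrib scaleR_matrix_vector_assoc)
  also have "\<dots> = y n
       + (h * (1 - \<theta>)) *\<^sub>R (- (A *v y n) + B *v ((1 - u) *\<^sub>R y (n - int m) + u *\<^sub>R y (n - int m + 1)))
       + (h * \<theta>) *\<^sub>R (- (A *v y (n + 1))
           + B *v ((1 - u) *\<^sub>R y (n - int m + 1) + u *\<^sub>R y (n - int m + 2)))
       + (h * \<theta>) *\<^sub>R (A *v y (n + 1))"
    using step unfolding theta_step_def of_real_smult_eq_scaleR by (rule arg_cong)
  also have "\<dots> = (\<Sum>b\<le>m. theta_coeff_mat A B \<theta> u m h b *v y (n - int b))"
    unfolding sum_theta_coeff_mat delays matrix_vector_right_distrib matrix_vector_scaleR_commute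
      Finite_Cartesian_Product.vec_eq_iff
    by (simp add: scaleR_complex_eq_mult algebra_simps)
  finally show ?thesis .
qed

lemma theta_char_equation:
  assumes char: "\<xi> ^ (m + 1) *s (theta_implicit_mat A \<theta> h *v w)
      = (\<Sum>b\<le>m. \<xi> ^ (m - b) *s (theta_coeff_mat A B \<theta> u m h b *v w))"
    and m: "m \<ge> 1" and mu: "2 \<le> m \<or> u = 0"
  shows "a_poly m \<xi> *s w + (of_real h * c_poly \<theta> m \<xi>) *s (A *v w)
    = (of_real h * b_poly \<theta> u \<xi>) *s (B *v w)" (is "?L = ?R")
proof -
  have delays: "(\<Sum>b\<le>m. theta_delay_weight \<theta> u m h b *\<^sub>R (B *v (\<xi> ^ (m - b) *s w)))
     = (h * (1 - \<theta>) * (1 - u)) *\<^sub>R (B *v w) + (h * ((1 - \<theta>) * u + \<theta> * (1 - u))) *\<^sub>R (\<xi> *s (B *v w))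
       + (h * \<theta> * u) *\<^sub>R (\<xi> ^ 2 *s (B *v w))"
  proof (cases "2 \<le> m")
    case True
    then show ?thesis
      using sum_theta_delay_weight[OF m mu, where v="\<lambda>b. B *v (\<xi> ^ (m - b) *s w)"]
      by (simp add: vector_scalar_commute)
  next
    case False
    then have "m = 1" "u = 0" using m mu by auto
    then show ?thesis by (simp add: theta_delay_weight_def vector_scalar_commute)
  qed
  have "(\<Sum>b\<le>m. \<xi> ^ (m - b) *s (theta_coeff_mat A B \<theta> u m h b *v w))
      = (\<Sum>b\<le>m. theta_coeff_mat A B \<theta> u m h b *v (\<xi> ^ (m - b) *s w))"
    by (simp add: vector_scalar_commute)
  also have "\<dots> = \<xi> ^ m *s w - (h * (1 - \<theta>)) *\<^sub>R (\<xi> ^ m *s (A *v w))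
      + (h * (1 - \<theta>) * (1 - u)) *\<^sub>R (B *v w) + (h * ((1 - \<theta>) * u + \<theta> * (1 - u))) *\<^sub>R (\<xi> *s (B *v w))
      + (h * \<theta> * u) *\<^sub>R (\<xi> ^ 2 *s (B *v w))"
    unfolding sum_theta_coeff_mat delays by (simp add: vector_scalar_commute)
  finally have char_rhs: "\<xi> ^ (m + 1) *s (theta_implicit_mat A \<theta> h *v w) = \<dots>"
    unfolding char .
  show ?thesis
  proof (rule Finite_Cartesian_Product.vec_eq_iff[THEN iffD2], rule allI)
    fix i
    have "?L $ i - ?R $ i = (\<xi> ^ (m + 1) *s (theta_implicit_mat A \<theta> h *v w)) $ i
        - (\<xi> ^ m *s w - (h * (1 - \<theta>)) *\<^sub>R (\<xi> ^ m *s (A *v w))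
      + (h * (1 - \<theta>) * (1 - u)) *\<^sub>R (B *v w) + (h * ((1 - \<theta>) * u + \<theta> * (1 - u))) *\<^sub>R (\<xi> *s (B *v w))
      + (h * \<theta> * u) *\<^sub>R (\<xi> ^ 2 *s (B *v w))) $ i"
      unfolding theta_implicit_mat_def matrix_vector_mult_add_rdistrib scaleR_matrix_vector_assoc
      by (simp add: a_poly_def b_poly_def c_poly_def scaleR_complex_eq_mult algebra_simps power2_eq_square)
    then show "?L $ i = ?R $ i" unfolding char_rhs by simp
  qed
qed

lemma theta_implicit_mat_mult_vec_eq_0:
  assumes pd: "pos_def_mat A" and "h * \<theta> \<ge> 0" and "theta_implicit_mat A \<theta> h *v x = 0"
  shows "x = 0"
proof (rule ccontr)
  assume "x \<noteq> 0"
  have "Re (cinner x (theta_implicit_mat A \<theta> h *v x)) = (norm x)\<^sup>2 + h * \<theta> * Re (qform x A)"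
    unfolding theta_implicit_mat_def qform_eq_cinner
    by (simp add: matrix_vector_mult_add_rdistrib scaleR_matrix_vector_assoc cinner_add_right
        cinner_scaleR_right cinner_self)
  moreover have "Re (qform x A) > 0"
    using pd \<open>x \<noteq> 0\<close> unfolding pos_def_mat_def by simp
  ultimately have "Re (cinner x (theta_implicit_mat A \<theta> h *v x)) > 0"
    using \<open>x \<noteq> 0\<close> \<open>h * \<theta> \<ge> 0\<close> by (simp add: add_pos_nonneg)
  with assms(3) show False by simp
qed

lemma theta_char_root_in_unit_disc:
  fixes A B :: "complex^'n^'n"
  assumes pd: "pos_def_mat A"
    and hyp: "field_of_values (mat_rpow A (p / 2 - 1) ** B ** mat_rpow A (- p / 2))
      \<subseteq> (\<Inter>y \<in> (\<lambda>z. - complex_of_real h * z) ` field_of_values A. D_set \<theta> u m y)"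
    and m: "m \<ge> 1" and mu: "2 \<le> m \<or> u = 0"
    and w: "w \<noteq> 0"
    and char: "\<xi> ^ (m + 1) *s (theta_implicit_mat A \<theta> h *v w)
      = (\<Sum>b\<le>m. \<xi> ^ (m - b) *s (theta_coeff_mat A B \<theta> u m h b *v w))"
  shows "cmod \<xi> < 1"
proof -
  obtain z \<mu> where "z \<in> field_of_values A"
    and "\<mu> \<in> field_of_values (mat_rpow A (p / 2 - 1) ** B ** mat_rpow A (- p / 2))"
    and "a_poly m \<xi> = (- of_real h * z) * c_poly \<theta> m \<xi> - (- of_real h * z) * \<mu> * b_poly \<theta> u \<xi>"
    using eigen_equation_field_of_values[OF pd w theta_char_equation[OF char m mu]] .
  then show ?thesis using hyp unfolding D_set_def by blast
qed

theorem mainTheorem4: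
  fixes A B :: "complex^'n^'n" and \<tau> \<theta> u h :: real and m :: nat
  assumes "\<tau> > 0"
    and "pos_def_mat A"
    and "0 \<le> \<theta>" "\<theta> \<le> 1"
    and "0 \<le> u" "u < 1"
    and "m \<ge> 1" "u > 0 \<longrightarrow> m \<ge> 2"
    and "h = \<tau> / (real m - u)"
    and "\<exists>p::real. field_of_values (mat_rpow A (p / 2 - 1) ** B ** mat_rpow A (- p / 2))
            \<subseteq> (\<Inter>y \<in> (\<lambda>z. - complex_of_real h * z) ` field_of_values A. D_set \<theta> u m y)"
  shows "theta_stable A B \<theta> u m h"
proof -
  obtain p where hyp: "field_of_values (mat_rpow A (p / 2 - 1) ** B ** mat_rpow A (- p / 2))
      \<subseteq> (\<Inter>y \<in> (\<lambda>z. - complex_of_real h * z) ` field_of_values A. D_set \<theta> u m y)"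
    using assms(10) by blast
  have m: "m \<ge> 1" and mu: "2 \<le> m \<or> u = 0" using assms(5,7,8) by auto
  have "h > 0" using assms(1,6,7,9) by simp
  then have "h * \<theta> \<ge> 0" using assms(3) by simp
  show ?thesis
    unfolding theta_stable_def
  proof (intro allI impI)
    fix y :: "int \<Rightarrow> complex^'n"
    assume step: "\<forall>n\<ge>0. theta_step A B \<theta> u m h y n"
    show "(\<lambda>k. y (int k)) \<longlonglongrightarrow> 0"
    proof (rule implicit_linear_recurrence_tendsto_zero)
      show "x = 0" if "theta_implicit_mat A \<theta> h *v x = 0" for x
        by (rule theta_implicit_mat_mult_vec_eq_0[OF assms(2) \<open>h * \<theta> \<ge> 0\<close> that])
      show "theta_implicit_mat A \<theta> h *v y (n + 1)
          = (\<Sum>b\<le>m. theta_coeff_mat A B \<theta> u m h b *v y (n - int b))" if "n \<ge> 0" for n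
        using step that by (intro theta_step_recurrence[OF _ m mu]) blast
    qed (rule theta_char_root_in_unit_disc[OF assms(2) hyp m mu])
  qed
qed

end
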